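(* Let $Z(n)=\sum_{k=0}^{n-1}\frac{1+(-1)^{k}k!(n-k-1)!}{n}$ for positive integers $n$. For $0<\lvert x\rvert<1$, \[ \sum_{n=0}^{\infty}Z(n+1)\frac{x^{n}}{n!}=e^{x}-\frac{1}{x^{2}}\ln\left(1-x^{2}\right). \] *)

theory Defs
  imports Complex_Main
begin

definition Z :: "nat \<Rightarrow> real" where
  "Z n = (\<Sum>k<n. (1 + (-1) ^ k * fact k * fact (n - k - 1)) / real n)"

end

theory Submission
  imports Defs "HOL-Analysis.Complex_Transcendental"
begin

text \<open>
  Since \<open>(n + 2) k! (n - k)! = k! (n + 1 - k)! + (k + 1)! (n - k)!\<close>, the alternating sum
  of \<open>(-1)^k k! (n - k)!\<close> over \<open>k \<le> n\<close> telescopes to \<open>(n + 1)! (1 + (-1)^n) / (n + 2)\<close>.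
  Hence \<open>Z (n + 1) / n! = 1 / n! + (1 + (-1)^n) / (n + 2)\<close>, and the series splits into the
  exponential series and \<open>(L x + L (-x)) / x\<^sup>2\<close>, where \<open>L t\<close>, the sum of \<open>t^m / m\<close> over
  \<open>m \<ge> 2\<close>, equals \<open>- ln (1 - t) - t\<close>.
\<close>

lemma alternating_fact_sum:
  "(of_nat n + 2) * (\<Sum>k\<le>n. (-1)^k * fact k * fact (n - k))
     = (fact (Suc n) * (1 + (-1)^n) :: 'a::{comm_ring_1, ring_char_0})"
proof -
  define b :: "nat \<Rightarrow> 'a" where "b k = fact k * fact (Suc n - k)" for k
  have telescoping_term:
    "(of_nat n + 2) * ((-1)^k * fact k * fact (n - k)) = (-1)^k * b k - (-1)^Suc k * b (Suc k)"
    if "k \<le> n" for k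
  proof -
    have "b k = (of_nat (n - k) + 1) * (fact k * fact (n - k))"
      using that by (simp add: b_def Suc_diff_le algebra_simps)
    moreover have "b (Suc k) = (of_nat k + 1) * (fact k * fact (n - k))"
      by (simp add: b_def algebra_simps)
    moreover have "(of_nat n + 2 :: 'a) = (of_nat (n - k) + 1) + (of_nat k + 1)"
      using that by simp
    ultimately have "(of_nat n + 2) * (fact k * fact (n - k)) = b k + b (Suc k)"
      by (simp only: distrib_right)
    then show ?thesis
      by (simp add: mult.left_commute[of "of_nat n + 2"] mult.assoc distrib_left)
  qed
  have "(of_nat n + 2) * (\<Sum>k\<le>n. (-1)^k * fact k * fact (n - k))
      = (\<Sum>k\<le>n. (-1)^k * b k - (-1)^Suc k * b (Suc k))"
    unfolding sum_distrib_left by (intro sum.cong) (simp_all add: telescoping_term)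
  also have "\<dots> = b 0 - (-1)^Suc n * b (Suc n)"
    using sum_telescope[of "\<lambda>k. (-1)^k * b k" n] by simp
  finally show ?thesis
    by (simp add: b_def algebra_simps)
qed

lemma Z_Suc: "Z (Suc n) = 1 + fact n * (1 + (-1)^n) / (real n + 2)"
proof -
  have alt: "(\<Sum>k\<le>n. (-1)^k * fact k * fact (n - k)) = fact (Suc n) * (1 + (-1)^n) / (real n + 2)"
    using alternating_fact_sum[of n, where 'a = real] by (simp add: eq_divide_eq mult.commute)
  have "Z (Suc n) = (\<Sum>k\<le>n. 1 + (-1)^k * fact k * fact (n - k)) / real (Suc n)"
    by (simp add: Z_def lessThan_Suc_atMost sum_divide_distrib)
  also have "\<dots> = (real (Suc n) + fact (Suc n) * (1 + (-1)^n) / (real n + 2)) / real (Suc n)"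
    unfolding sum.distrib alt by simp
  also have "\<dots> = 1 + fact n * (1 + (-1)^n) / (real n + 2)"
    by (simp add: add_divide_distrib del: of_nat_Suc)
  finally show ?thesis .
qed

lemma ln_series_from_2:
  fixes t :: real
  assumes "\<bar>t\<bar> < 1"
  shows "(\<lambda>n. t ^ (n + 2) / real (n + 2)) sums (- ln (1 - t) - t)"
proof -
  have "(\<lambda>n. t ^ n / real n) sums (- ln (1 - t))"
    using sums_minus[OF ln_series'[of "-t"]] assms by simp
  then show ?thesis
    by (subst sums_iff_shift) (simp add: numeral_2_eq_2)
qed

lemma ln_one_minus_square_series:
  fixes x :: real
  assumes "0 < \<bar>x\<bar>" and "\<bar>x\<bar> < 1"
  shows "(\<lambda>n. (1 + (-1)^n) / (real n + 2) * x ^ n) sums (- ln (1 - x\<^sup>2) / x\<^sup>2)"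
proof -
  have "(\<lambda>n. (x ^ (n + 2) / real (n + 2) + (-x) ^ (n + 2) / real (n + 2)) / x\<^sup>2)
      sums (((- ln (1 - x) - x) + (- ln (1 - -x) - -x)) / x\<^sup>2)"
    using assms(2) by (intro sums_divide sums_add ln_series_from_2) auto
  moreover have "ln (1 - x) + ln (1 + x) = ln (1 - x\<^sup>2)"
  proof -
    have "0 < 1 - x" and "0 < 1 + x"
      using assms(2) by auto
    from ln_mult_pos[OF this] show ?thesis
      by (simp add: power2_eq_square algebra_simps)
  qed
  moreover have "(x ^ (n + 2) / real (n + 2) + (-x) ^ (n + 2) / real (n + 2)) / x\<^sup>2
      = (1 + (-1)^n) / (real n + 2) * x ^ n" for n
  proof -
    have "x ^ (n + 2) + (-x) ^ (n + 2) = (1 + (-1)^n) * x ^ n * x\<^sup>2"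
      by (simp add: power_minus[of x] power_add power2_eq_square algebra_simps)
    then show ?thesis
      using assms(1) by (simp flip: add_divide_distrib)
  qed
  ultimately show ?thesis
    by (simp add: algebra_simps)
qed

theorem mainTheorem14:
  fixes x :: real
  assumes "0 < \<bar>x\<bar>" and "\<bar>x\<bar> < 1"
  shows "(\<lambda>n. Z (n + 1) * x ^ n / fact n) sums (exp x - ln (1 - x\<^sup>2) / x\<^sup>2)"
proof -
  have "Z (n + 1) * x ^ n / fact n = x ^ n /\<^sub>R fact n + (1 + (-1)^n) / (real n + 2) * x ^ n" for n
    by (simp add: Z_Suc field_simps)
  then show ?thesis
    using sums_add[OF exp_converges ln_one_minus_square_series[OF assms]] by simp
qed

end
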